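(* Let $T$ be a finite rooted tree in which every inner node has at least two children, with node set $V$ and leaf set $L$. Let $S\subseteq V\setminus L$, and let $(\pi,\sigma)$ and $(\pi',\sigma')$ be two pairs of injective maps from $S$ to $L$, each identifying $S$ and having unique request. If $\pi(S)=\pi'(S)$ and $\sigma(S)=\sigma'(S)$, then $\pi=\pi'$ and $\sigma=\sigma'$.
   Context: Every node is its own ancestor and descendant. A pair $(\pi,\sigma)$ of injective maps from $S\subseteq V\setminus L$ to $L$ identifies $S$ if for each $s\in S$, $s$ is the least common ancestor of $\pi(s)$ and $\sigma(s)$. For $s\in S$, a node $x$ is $s$-requested in $(\pi,\sigma)$ if $x$ lies on the path of $T$ from $\pi(s)$ to $\sigma(s)$. The pair has unique request if every node of $T$ is $s$-requested for at most one $s\in S$. *)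

theory Defs
  imports Main
begin

text \<open>A finite rooted tree is given by a finite node set V, a root r \<in> V and a parent
  function; the parent of a non-root node is in V and every node reaches the root by
  following parents (hence the structure is a tree). Only the values of par on V - {r} matter.\<close>

inductive anc :: "'a set \<Rightarrow> 'a \<Rightarrow> ('a \<Rightarrow> 'a) \<Rightarrow> 'a \<Rightarrow> 'a \<Rightarrow> bool"
  for V r par where
  anc_refl: "y \<in> V \<Longrightarrow> anc V r par y y"
| anc_step: "anc V r par x (par y) \<Longrightarrow> y \<in> V \<Longrightarrow> y \<noteq> r \<Longrightarrow> anc V r par x y"

definition rooted_tree :: "'a set \<Rightarrow> 'a \<Rightarrow> ('a \<Rightarrow> 'a) \<Rightarrow> bool" where
  "rooted_tree V r par \<longleftrightarrow> finite V \<and> r \<in> V \<and>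
     (\<forall>v \<in> V - {r}. par v \<in> V) \<and> (\<forall>v \<in> V. anc V r par r v)"

definition children :: "'a set \<Rightarrow> 'a \<Rightarrow> ('a \<Rightarrow> 'a) \<Rightarrow> 'a \<Rightarrow> 'a set" where
  "children V r par x = {v \<in> V - {r}. par v = x}"

definition leaves :: "'a set \<Rightarrow> 'a \<Rightarrow> ('a \<Rightarrow> 'a) \<Rightarrow> 'a set" where
  "leaves V r par = {x \<in> V. children V r par x = {}}"

definition branching :: "'a set \<Rightarrow> 'a \<Rightarrow> ('a \<Rightarrow> 'a) \<Rightarrow> bool" where
  "branching V r par \<longleftrightarrow> (\<forall>x \<in> V - leaves V r par. card (children V r par x) \<ge> 2)"

definition is_lca :: "'a set \<Rightarrow> 'a \<Rightarrow> ('a \<Rightarrow> 'a) \<Rightarrow> 'a \<Rightarrow> 'a \<Rightarrow> 'a \<Rightarrow> bool" where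
  "is_lca V r par c a b \<longleftrightarrow> anc V r par c a \<and> anc V r par c b \<and>
     (\<forall>d. anc V r par d a \<and> anc V r par d b \<longrightarrow> anc V r par d c)"

definition tree_path :: "'a set \<Rightarrow> 'a \<Rightarrow> ('a \<Rightarrow> 'a) \<Rightarrow> 'a \<Rightarrow> 'a \<Rightarrow> 'a set" where
  "tree_path V r par a b = {x \<in> V. (anc V r par x a \<or> anc V r par x b) \<and>
     (\<exists>c. is_lca V r par c a b \<and> anc V r par c x)}"

definition identifies :: "'a set \<Rightarrow> 'a \<Rightarrow> ('a \<Rightarrow> 'a) \<Rightarrow> 'a set \<Rightarrow> ('a \<Rightarrow> 'a) \<Rightarrow> ('a \<Rightarrow> 'a) \<Rightarrow> bool" where
  "identifies V r par S \<pi> \<sigma> \<longleftrightarrow> (\<forall>s \<in> S. is_lca V r par s (\<pi> s) (\<sigma> s))"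

definition requested :: "'a set \<Rightarrow> 'a \<Rightarrow> ('a \<Rightarrow> 'a) \<Rightarrow> ('a \<Rightarrow> 'a) \<Rightarrow> ('a \<Rightarrow> 'a) \<Rightarrow> 'a \<Rightarrow> 'a \<Rightarrow> bool" where
  "requested V r par \<pi> \<sigma> s x \<longleftrightarrow> x \<in> tree_path V r par (\<pi> s) (\<sigma> s)"

definition unique_request :: "'a set \<Rightarrow> 'a \<Rightarrow> ('a \<Rightarrow> 'a) \<Rightarrow> 'a set \<Rightarrow> ('a \<Rightarrow> 'a) \<Rightarrow> ('a \<Rightarrow> 'a) \<Rightarrow> bool" where
  "unique_request V r par S \<pi> \<sigma> \<longleftrightarrow>
     (\<forall>x \<in> V. \<forall>s \<in> S. \<forall>t \<in> S. requested V r par \<pi> \<sigma> s x \<and> requested V r par \<pi> \<sigma> t x \<longrightarrow> s = t)"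

end

theory Submission
  imports Defs
begin

(* For a node v let T_v be the subtree below v. By unique request, an element t of S with an
   endpoint in T_v lies in T_v itself unless v is requested by t. Hence for s in S the sets
   pi(S) and sigma(S) meet T_s in equally many leaves, while at a node v strictly between s and
   pi(s) the set pi(S) has exactly one leaf more in T_v, namely pi(s). These counts depend only on
   pi(S) and sigma(S). If pi'(t) = pi(s), then s and t are comparable ancestors of this leaf, and
   if the lower one were strictly lower it would be balanced for one pair and unbalanced for the
   other; so s = t. *)

lemma anc_in_nodes: "anc V r par x y \<Longrightarrow> x \<in> V \<and> y \<in> V"
  by (induction rule: anc.induct) auto

lemma anc_trans:
  assumes "anc V r par x y" "anc V r par y z"
  shows "anc V r par x z"
  using assms(2,1) by (induction rule: anc.induct) (auto intro: anc.intros)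

lemma anc_parent:
  assumes "anc V r par x y" "x \<noteq> y"
  shows "y \<noteq> r \<and> anc V r par x (par y)"
  using assms by (cases rule: anc.cases) auto

lemma anc_root:
  assumes "anc V r par x r"
  shows "x = r"
  using assms by (cases rule: anc.cases) simp_all

lemma anc_linear:
  "anc V r par a x \<Longrightarrow> anc V r par b x \<Longrightarrow> anc V r par a b \<or> anc V r par b a"
proof (induction arbitrary: b rule: anc.induct)
  case (anc_refl y)
  then show ?case by simp
next
  case (anc_step a y)
  show ?case
  proof (cases "b = y")
    case True
    then show ?thesis using anc_step.hyps by (simp add: anc.anc_step)
  next
    case False
    then have "anc V r par b (par y)"
      using anc_parent[OF anc_step.prems] by simp
    then show ?thesis by (rule anc_step.IH)
  qed
qed

lemma anc_antisym_from_root: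
  "anc V r par z y \<Longrightarrow> z = r \<Longrightarrow> anc V r par x y \<Longrightarrow> anc V r par y x \<Longrightarrow> x = y"
proof (induction arbitrary: x rule: anc.induct)
  case (anc_refl y)
  then show ?case using anc_root by metis
next
  case (anc_step z y)
  have up: "anc V r par (par y) y"
    using anc_in_nodes[OF anc_step.hyps(1)] anc_step.hyps(2,3) by (simp add: anc.intros)
  show ?case
  proof (rule ccontr)
    assume "x \<noteq> y"
    then have "anc V r par x (par y)"
      using anc_parent[OF anc_step.prems(2)] by simp
    then have "x = par y"
      using anc_step.IH[OF anc_step.prems(1)] anc_trans[OF up anc_step.prems(3)] by blast
    moreover have "y = par y"
      using anc_step.IH[OF anc_step.prems(1) _ up] anc_step.prems(3) calculation by blast
    ultimately show False using \<open>x \<noteq> y\<close> by metis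
  qed
qed

lemma anc_antisym:
  assumes "rooted_tree V r par" "anc V r par x y" "anc V r par y x"
  shows "x = y"
proof -
  have "anc V r par r y"
    using assms(1) anc_in_nodes[OF assms(2)] unfolding rooted_tree_def by simp
  then show ?thesis using anc_antisym_from_root[OF _ refl assms(2,3)] by simp
qed

definition subtree :: "'a set \<Rightarrow> 'a \<Rightarrow> ('a \<Rightarrow> 'a) \<Rightarrow> 'a \<Rightarrow> 'a set" where
  "subtree V r par v = {y. anc V r par v y}"

lemma finite_subtree:
  assumes "rooted_tree V r par"
  shows "finite (subtree V r par v)"
proof (rule finite_subset)
  show "subtree V r par v \<subseteq> V"
    unfolding subtree_def by (auto dest: anc_in_nodes)
  show "finite V" using assms unfolding rooted_tree_def by simp
qed

lemma is_lca_commute: "is_lca V r par c a b \<longleftrightarrow> is_lca V r par c b a"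
  unfolding is_lca_def by blast

lemma tree_path_commute: "tree_path V r par a b = tree_path V r par b a"
  unfolding tree_path_def is_lca_def by auto

lemma identifies_swap: "identifies V r par S \<pi> \<sigma> \<Longrightarrow> identifies V r par S \<sigma> \<pi>"
  unfolding identifies_def by (simp add: is_lca_commute)

lemma unique_request_swap: "unique_request V r par S \<pi> \<sigma> \<Longrightarrow> unique_request V r par S \<sigma> \<pi>"
  unfolding unique_request_def requested_def by (simp add: tree_path_commute)

lemma identifies_anc_endpoints:
  assumes "identifies V r par S \<pi> \<sigma>" "s \<in> S"
  shows "anc V r par s (\<pi> s)" "anc V r par s (\<sigma> s)"
  using assms unfolding identifies_def is_lca_def by blast+

lemma requested_if_between:
  assumes "identifies V r par S \<pi> \<sigma>" "t \<in> S" "anc V r par t v"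
    and "anc V r par v (\<pi> t) \<or> anc V r par v (\<sigma> t)"
  shows "requested V r par \<pi> \<sigma> t v"
proof -
  have "is_lca V r par t (\<pi> t) (\<sigma> t)"
    using assms(1,2) unfolding identifies_def by blast
  moreover have "v \<in> V"
    using anc_in_nodes[OF assms(3)] by simp
  ultimately show ?thesis
    using assms(3,4) unfolding requested_def tree_path_def by blast
qed

lemma endpoint_image_subtree:
  assumes "identifies V r par S \<pi> \<sigma>"
  shows "\<pi> ` (S \<inter> subtree V r par v) \<subseteq> subtree V r par v"
proof (rule image_subsetI)
  fix t assume "t \<in> S \<inter> subtree V r par v"
  then have t: "t \<in> S" "anc V r par v t"
    unfolding subtree_def by simp_all
  show "\<pi> t \<in> subtree V r par v"
    using anc_trans[OF t(2) identifies_anc_endpoints(1)[OF assms t(1)]]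
    unfolding subtree_def by simp
qed

lemma endpoint_in_subtree_cases:
  assumes "identifies V r par S \<pi> \<sigma>" "unique_request V r par S \<pi> \<sigma>"
    and "s \<in> S" "requested V r par \<pi> \<sigma> s v"
    and "t \<in> S" "\<pi> t \<in> subtree V r par v \<or> \<sigma> t \<in> subtree V r par v"
  shows "t = s \<or> t \<in> subtree V r par v"
proof (rule disjCI)
  assume "t \<notin> subtree V r par v"
  moreover have "anc V r par v t \<or> anc V r par t v"
    using assms(6) anc_linear identifies_anc_endpoints[OF assms(1,5)]
    unfolding subtree_def by (metis mem_Collect_eq)
  ultimately have "anc V r par t v"
    unfolding subtree_def by simp
  then have "requested V r par \<pi> \<sigma> t v"
    using requested_if_between[OF assms(1,5)] assms(6) unfolding subtree_def by simp
  moreover have "v \<in> V"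
    using assms(4) unfolding requested_def tree_path_def by simp
  ultimately show "t = s"
    using assms(2-5) unfolding unique_request_def by blast
qed

lemma card_endpoints_in_own_subtree:
  assumes id: "identifies V r par S \<pi> \<sigma>" and ur: "unique_request V r par S \<pi> \<sigma>"
    and inj: "inj_on \<pi> S" "inj_on \<sigma> S" and s: "s \<in> S"
  shows "card (\<pi> ` S \<inter> subtree V r par s) = card (\<sigma> ` S \<inter> subtree V r par s)"
proof -
  have s_\<pi>s: "anc V r par s (\<pi> s)"
    using identifies_anc_endpoints(1)[OF id s] .
  then have s_s: "anc V r par s s"
    using anc_in_nodes[OF s_\<pi>s] by (simp add: anc_refl)
  then have "requested V r par \<pi> \<sigma> s s"
    using requested_if_between[OF id s] s_\<pi>s by simp
  then have own: "t \<in> subtree V r par s"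
    if "t \<in> S" "\<pi> t \<in> subtree V r par s \<or> \<sigma> t \<in> subtree V r par s" for t
    using endpoint_in_subtree_cases[OF id ur s _ that] s_s unfolding subtree_def by auto
  have "\<pi> ` S \<inter> subtree V r par s = \<pi> ` (S \<inter> subtree V r par s)"
    using own endpoint_image_subtree[OF id] by blast
  moreover have "\<sigma> ` S \<inter> subtree V r par s = \<sigma> ` (S \<inter> subtree V r par s)"
    using own endpoint_image_subtree[OF identifies_swap[OF id]] by blast
  ultimately show ?thesis
    using card_image[OF inj_on_subset[OF inj(1) Int_lower1]]
      card_image[OF inj_on_subset[OF inj(2) Int_lower1]] by simp
qed

lemma card_endpoints_in_subtree_below_own:
  assumes rt: "rooted_tree V r par"
    and id: "identifies V r par S \<pi> \<sigma>" and ur: "unique_request V r par S \<pi> \<sigma>"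
    and inj: "inj_on \<pi> S" "inj_on \<sigma> S" and s: "s \<in> S"
    and s_v: "anc V r par s v" and "v \<noteq> s" and v_\<pi>s: "anc V r par v (\<pi> s)"
  shows "card (\<pi> ` S \<inter> subtree V r par v) = Suc (card (\<sigma> ` S \<inter> subtree V r par v))"
proof -
  have req: "requested V r par \<pi> \<sigma> s v"
    using requested_if_between[OF id s s_v] v_\<pi>s by simp
  have s_out: "s \<notin> subtree V r par v"
    using anc_antisym[OF rt s_v] \<open>v \<noteq> s\<close> unfolding subtree_def by auto
  have "\<sigma> s \<notin> subtree V r par v"
  proof
    assume "\<sigma> s \<in> subtree V r par v"
    then have "anc V r par v s"
      using id s v_\<pi>s unfolding identifies_def is_lca_def subtree_def by blast
    then show False using s_out unfolding subtree_def by simp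
  qed
  then have \<sigma>_eq: "\<sigma> ` S \<inter> subtree V r par v = \<sigma> ` (S \<inter> subtree V r par v)"
    using endpoint_in_subtree_cases[OF id ur s req] endpoint_image_subtree[OF identifies_swap[OF id]]
    by blast
  have \<pi>_eq: "\<pi> ` S \<inter> subtree V r par v = insert (\<pi> s) (\<pi> ` (S \<inter> subtree V r par v))"
    using endpoint_in_subtree_cases[OF id ur s req] endpoint_image_subtree[OF id] s v_\<pi>s
    unfolding subtree_def by blast
  have "\<pi> s \<notin> \<pi> ` (S \<inter> subtree V r par v)"
    using inj(1) s s_out by (auto dest: inj_onD)
  moreover have "finite (S \<inter> subtree V r par v)"
    using finite_subtree[OF rt] by simp
  ultimately show ?thesis
    unfolding \<pi>_eq \<sigma>_eq
    using card_image[OF inj_on_subset[OF inj(1) Int_lower1]]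
      card_image[OF inj_on_subset[OF inj(2) Int_lower1]] by simp
qed

lemma shared_first_endpoint_anc_imp_eq:
  assumes rt: "rooted_tree V r par"
    and inj: "inj_on \<pi> S" "inj_on \<sigma> S" "inj_on \<pi>' S" "inj_on \<sigma>' S"
    and id: "identifies V r par S \<pi> \<sigma>" and ur: "unique_request V r par S \<pi> \<sigma>"
    and id': "identifies V r par S \<pi>' \<sigma>'" and ur': "unique_request V r par S \<pi>' \<sigma>'"
    and images: "\<pi> ` S = \<pi>' ` S" "\<sigma> ` S = \<sigma>' ` S"
    and s: "s \<in> S" and t: "t \<in> S" and shared: "\<pi> s = \<pi>' t" and s_t: "anc V r par s t"
  shows "s = t"
proof (rule ccontr)
  assume "s \<noteq> t"
  moreover have "anc V r par t (\<pi> s)"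
    using identifies_anc_endpoints(1)[OF id' t] shared by simp
  ultimately have "card (\<pi> ` S \<inter> subtree V r par t) = Suc (card (\<sigma> ` S \<inter> subtree V r par t))"
    using card_endpoints_in_subtree_below_own[OF rt id ur inj(1,2) s s_t] by simp
  moreover have "card (\<pi>' ` S \<inter> subtree V r par t) = card (\<sigma>' ` S \<inter> subtree V r par t)"
    using card_endpoints_in_own_subtree[OF id' ur' inj(3,4) t] .
  ultimately show False
    using images by simp
qed

lemma first_endpoints_agree:
  assumes rt: "rooted_tree V r par"
    and inj: "inj_on \<pi> S" "inj_on \<sigma> S" "inj_on \<pi>' S" "inj_on \<sigma>' S"
    and id: "identifies V r par S \<pi> \<sigma>" and ur: "unique_request V r par S \<pi> \<sigma>"
    and id': "identifies V r par S \<pi>' \<sigma>'" and ur': "unique_request V r par S \<pi>' \<sigma>'"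
    and images: "\<pi> ` S = \<pi>' ` S" "\<sigma> ` S = \<sigma>' ` S"
    and s: "s \<in> S"
  shows "\<pi> s = \<pi>' s"
proof -
  obtain t where t: "t \<in> S" and shared: "\<pi> s = \<pi>' t"
    using images(1) s by (metis imageE imageI)
  have "anc V r par s t \<or> anc V r par t s"
    using anc_linear identifies_anc_endpoints(1)[OF id s] identifies_anc_endpoints(1)[OF id' t]
      shared by metis
  then have "s = t"
  proof
    assume "anc V r par s t"
    then show "s = t"
      using shared_first_endpoint_anc_imp_eq[OF assms(1-11) s t shared] by simp
  next
    assume "anc V r par t s"
    then show "s = t"
      using shared_first_endpoint_anc_imp_eq[OF rt inj(3,4,1,2) id' ur' id ur
          images[symmetric] t s shared[symmetric]] by simp
  qed
  then show ?thesis
    using shared by simp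
qed

theorem lemma3p4:
  fixes V :: "'a set" and r :: 'a and par :: "'a \<Rightarrow> 'a"
    and S :: "'a set" and \<pi> \<sigma> \<pi>' \<sigma>' :: "'a \<Rightarrow> 'a"
  assumes "rooted_tree V r par"
    and "branching V r par"
    and "S \<subseteq> V - leaves V r par"
    and "inj_on \<pi> S" and "\<pi> ` S \<subseteq> leaves V r par"
    and "inj_on \<sigma> S" and "\<sigma> ` S \<subseteq> leaves V r par"
    and "inj_on \<pi>' S" and "\<pi>' ` S \<subseteq> leaves V r par"
    and "inj_on \<sigma>' S" and "\<sigma>' ` S \<subseteq> leaves V r par"
    and "identifies V r par S \<pi> \<sigma>" and "unique_request V r par S \<pi> \<sigma>"
    and "identifies V r par S \<pi>' \<sigma>'" and "unique_request V r par S \<pi>' \<sigma>'"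
    and "\<pi> ` S = \<pi>' ` S" and "\<sigma> ` S = \<sigma>' ` S"
  shows "(\<forall>s \<in> S. \<pi> s = \<pi>' s) \<and> (\<forall>s \<in> S. \<sigma> s = \<sigma>' s)"
  using first_endpoints_agree[OF assms(1,4,6,8,10,12-17)]
    first_endpoints_agree[OF assms(1,6,4,10,8) identifies_swap[OF assms(12)]
      unique_request_swap[OF assms(13)] identifies_swap[OF assms(14)]
      unique_request_swap[OF assms(15)] assms(17,16)]
  by blast

end
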